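(* Let $a,c\in\mathbb{C}$ with $c\notin\{0,-1,-2,\dots\}$. Then for all $x\in\mathbb{C}$, $$\phi_2(a,a;c;x,-x)={}_1F_2\!\left[\begin{array}{c}a\\ \tfrac12 c,\ \tfrac12 c+\tfrac12\end{array};\frac{x^2}{4}\right]=\sum_{k=0}^\infty\frac{(a)_k}{(\tfrac12 c)_k(\tfrac12 c+\tfrac12)_k}\frac{(x^2/4)^k}{k!}.$$ In particular, if $2a\notin\{0,-1,-2,\dots\}$, then $$\phi_2(a,a;2a;x,-x)={}_0F_1\!\left[\begin{array}{c}-\\ a+\tfrac12\end{array};\frac{x^2}{4}\right]=\sum_{k=0}^\infty\frac{1}{(a+\tfrac12)_k}\frac{(x^2/4)^k}{k!}.$$
   Context: $(\lambda)_n=\Gamma(\lambda+n)/\Gamma(\lambda)$ denotes the Pochhammer symbol. Humbert's function $\phi_2$ is defined by $$\phi_2(a,b;c;x,y)=\sum_{n=0}^\infty\sum_{k=0}^\infty\frac{(a)_n(b)_k}{(c)_{n+k}}\frac{x^n y^k}{n!\,k!},$$ convergent for all $x,y\in\mathbb{C}$ when $c\notin\{0,-1,-2,\dots\}$. *)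

theory Defs
  imports "HOL-Analysis.Analysis"
begin

definition phi2_term :: "complex \<Rightarrow> complex \<Rightarrow> complex \<Rightarrow> complex \<Rightarrow> complex \<Rightarrow> nat \<times> nat \<Rightarrow> complex" where
  "phi2_term a b c x y = (\<lambda>(n, k). pochhammer a n * pochhammer b k / pochhammer c (n + k)
      * x ^ n * y ^ k / (fact n * fact k))"

definition phi2 :: "complex \<Rightarrow> complex \<Rightarrow> complex \<Rightarrow> complex \<Rightarrow> complex \<Rightarrow> complex" where
  "phi2 a b c x y = infsum (phi2_term a b c x y) UNIV"

definition hyp1F2_term :: "complex \<Rightarrow> complex \<Rightarrow> complex \<Rightarrow> complex \<Rightarrow> nat \<Rightarrow> complex" where
  "hyp1F2_term a b1 b2 z k = pochhammer a k / (pochhammer b1 k * pochhammer b2 k) * z ^ k / fact k"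

definition hyp0F1_term :: "complex \<Rightarrow> complex \<Rightarrow> nat \<Rightarrow> complex" where
  "hyp0F1_term b z k = 1 / pochhammer b k * z ^ k / fact k"

end

theory Submission
  imports Defs "HOL-Computational_Algebra.Formal_Power_Series" "HOL-Real_Asymp.Real_Asymp"
begin

(* Grouping the terms of phi_2(a,a;c;x,-x) along the antidiagonals n + k = N gives x^N/(c)_N
   times the N-th coefficient of (1-z)^(-a) (1+z)^(-a) = (1-z^2)^(-a), which is 0 for odd N
   and (a)_m/m! for N = 2m; the duplication formula (c)_2m = 4^m (c/2)_m (c/2+1/2)_m turns the
   even terms into those of 1F2 at x^2/4. The product identity follows from the differential
   equation (1-z^2) W' = 2az W. The regrouping is justified by |(a)_n (b)_k| <= (A)_(n+k) with
   A = max |a| |b|, which dominates the antidiagonal sums by a series summable by the ratio test.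
   For c = 2a the numerator (a)_k cancels against (c/2)_k, leaving 0F1. *)

lemma fps_ode_of_coefficient_recurrence:
  fixes u :: "nat \<Rightarrow> 'a::comm_ring_1"
  assumes "\<And>n. of_nat (Suc n) * u (Suc n) = s * (a + of_nat n) * u n"
  shows "(1 - fps_const s * fps_X) * fps_deriv (Abs_fps u) = fps_const (s * a) * Abs_fps u"
proof (rule fps_ext)
  fix n
  show "fps_nth ((1 - fps_const s * fps_X) * fps_deriv (Abs_fps u)) n = fps_nth (fps_const (s * a) * Abs_fps u) n"
    using assms[of n] by (cases n) (simp_all add: algebra_simps)
qed

lemma fps_ode_coefficient_recurrence:
  fixes W :: "'a::comm_ring_1 fps"
  assumes "(1 - fps_X^2) * fps_deriv W = fps_const b * fps_X * W"
  shows "fps_nth W 1 = 0"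
    and "of_nat (m + 2) * fps_nth W (m + 2) = (b + of_nat m) * fps_nth W m"
proof -
  have coeff: "fps_nth (fps_deriv W) k - fps_nth (fps_X^2 * fps_deriv W) k = fps_nth (fps_const b * (fps_X * W)) k" for k
    using arg_cong[OF assms, of "\<lambda>F. fps_nth F k"] by (simp add: algebra_simps)
  show "fps_nth W 1 = 0"
    using coeff[of 0] by (simp add: fps_X_power_mult_nth)
  have "fps_nth (fps_X^2 * fps_deriv W) (m + 1) = of_nat m * fps_nth W m"
    by (cases m) (simp_all add: fps_X_power_mult_nth)
  then show "of_nat (m + 2) * fps_nth W (m + 2) = (b + of_nat m) * fps_nth W m"
    using coeff[of "m + 1"] by (simp add: algebra_simps)
qed

lemma pochhammer_over_fact_Suc:
  "of_nat (Suc n) * (pochhammer a (Suc n) / fact (Suc n)) = (a + of_nat n) * (pochhammer a n / fact n :: 'a::field_char_0)"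
  by (simp add: pochhammer_Suc field_simps del: of_nat_Suc)

lemma fps_pochhammer_reflection_product:
  fixes a :: "'a::field_char_0"
  shows "Abs_fps (\<lambda>n. pochhammer a n / fact n) * Abs_fps (\<lambda>n. (-1)^n * pochhammer a n / fact n)
       = Abs_fps (\<lambda>n. if even n then pochhammer a (n div 2) / fact (n div 2) else 0)"
    (is "?U * ?V = _")
proof -
  have "(1 - fps_const 1 * fps_X) * fps_deriv ?U = fps_const (1 * a) * ?U"
    by (rule fps_ode_of_coefficient_recurrence) (simp only: mult_1 pochhammer_over_fact_Suc)
  then have U: "(1 - fps_X) * fps_deriv ?U = fps_const a * ?U"
    by simp
  have "(1 - fps_const (-1) * fps_X) * fps_deriv ?V = fps_const (-1 * a) * ?V"
  proof (rule fps_ode_of_coefficient_recurrence)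
    fix n
    show "of_nat (Suc n) * ((-1)^Suc n * pochhammer a (Suc n) / fact (Suc n))
        = -1 * (a + of_nat n) * ((-1)^n * pochhammer a n / fact n)"
      using arg_cong[OF pochhammer_over_fact_Suc[of n a], of "\<lambda>t. - ((-1)^n * t)"]
      by (simp add: field_simps)
  qed
  then have V: "(1 + fps_X) * fps_deriv ?V = - fps_const a * ?V"
    by (simp flip: fps_const_neg del: fps_const_neg)
  define W where "W = ?U * ?V"
  have "(1 - fps_X^2) * fps_deriv W = (1 + fps_X) * ?V * ((1 - fps_X) * fps_deriv ?U)
      + (1 - fps_X) * ?U * ((1 + fps_X) * fps_deriv ?V)"
    by (simp add: W_def algebra_simps power2_eq_square)
  also have "\<dots> = fps_const (2 * a) * fps_X * W"
    unfolding U V W_def mult_2 fps_const_add[symmetric] by (simp add: algebra_simps del: fps_const_neg)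
  finally have ode: "(1 - fps_X^2) * fps_deriv W = fps_const (2 * a) * fps_X * W" .
  have even: "fps_nth W (2 * m) = pochhammer a m / fact m" for m
  proof (induction m)
    case 0
    then show ?case by (simp add: W_def)
  next
    case (Suc m)
    have "of_nat (2 * m + 2) * fps_nth W (2 * m + 2) = (2 * a + of_nat (2 * m)) * fps_nth W (2 * m)"
      using fps_ode_coefficient_recurrence(2)[OF ode, of "2 * m"] by simp
    also have "\<dots> = 2 * ((a + of_nat m) * (pochhammer a m / fact m))"
      unfolding Suc by (simp add: ring_distribs)
    also have "\<dots> = of_nat (2 * m + 2) * (pochhammer a (Suc m) / fact (Suc m))"
    proof -
      have "of_nat (2 * m + 2) = (2::'a) * of_nat (Suc m)"
        by simp
      then show ?thesis
        by (simp only: pochhammer_over_fact_Suc[symmetric] mult.assoc)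
    qed
    finally show ?case
      by (simp only: mult_cancel_left of_nat_eq_0_iff) simp
  qed
  have odd: "fps_nth W (2 * m + 1) = 0" for m
  proof (induction m)
    case 0
    then show ?case using fps_ode_coefficient_recurrence(1)[OF ode] by simp
  next
    case (Suc m)
    have "of_nat (2 * m + 3) * fps_nth W (2 * m + 3) = 0"
      using fps_ode_coefficient_recurrence(2)[OF ode, of "2 * m + 1"] Suc by (simp add: eval_nat_numeral)
    moreover have "of_nat (2 * m + 3) \<noteq> (0::'a)"
      by (simp only: of_nat_eq_0_iff)
    moreover have "2 * Suc m + 1 = 2 * m + 3"
      by simp
    ultimately show ?case
      by (metis mult_eq_0_iff)
  qed
  show ?thesis
    unfolding W_def[symmetric]
    by (rule fps_ext) (auto elim!: evenE oddE simp: even odd[simplified])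
qed

lemma pochhammer_nonneg_of_nonneg:
  fixes x :: "'a::linordered_semidom"
  shows "0 \<le> x \<Longrightarrow> 0 \<le> pochhammer x n"
  by (induction n) (simp_all add: pochhammer_Suc)

lemma pochhammer_mono:
  fixes x y :: "'a::linordered_semidom"
  assumes "0 \<le> x" "x \<le> y"
  shows "pochhammer x n \<le> pochhammer y n"
  using assms by (induction n) (simp_all add: pochhammer_Suc mult_mono pochhammer_nonneg_of_nonneg)

lemma norm_pochhammer_le:
  fixes z :: "'a::real_normed_field"
  assumes "norm z \<le> A"
  shows "norm (pochhammer z n) \<le> pochhammer A n"
proof (induction n)
  case (Suc n)
  have "norm (z + of_nat n) \<le> A + of_nat n"
    using norm_triangle_ineq[of z "of_nat n"] assms by simp
  moreover have "0 \<le> A"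
    using assms norm_ge_zero order_trans by blast
  ultimately show ?case
    using Suc by (simp add: pochhammer_Suc norm_mult mult_mono pochhammer_nonneg_of_nonneg)
qed simp

lemma pochhammer_mult_le_pochhammer_add:
  fixes x :: "'a::linordered_semidom"
  assumes "0 \<le> x"
  shows "pochhammer x n * pochhammer x k \<le> pochhammer x (n + k)"
  using assms unfolding pochhammer_product'
  by (intro mult_left_mono pochhammer_mono pochhammer_nonneg_of_nonneg) simp_all

lemma summable_pochhammer_majorant:
  fixes c :: "'a::real_normed_field"
  assumes "0 \<le> A"
  shows "summable (\<lambda>N. pochhammer A N * R^N / (fact N * norm (pochhammer c N)))"
    (is "summable ?b")
proof -
  define r where "r N = (A + of_nat N) / (of_nat N + 1) * R * norm (inverse (c + of_nat N))" for N
  have ratio: "?b (Suc N) = ?b N * r N" for N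
    by (simp add: r_def pochhammer_Suc norm_mult norm_inverse divide_inverse inverse_mult_distrib mult_ac)
  have "(\<lambda>N. (A + real N) / (real N + 1)) \<longlonglongrightarrow> 1"
    by real_asymp
  moreover have "(\<lambda>N. norm (inverse (c + of_nat N))) \<longlonglongrightarrow> 0"
    by (intro tendsto_norm_zero filterlim_compose[OF tendsto_inverse_0]
          tendsto_add_filterlim_at_infinity[OF tendsto_const] tendsto_of_nat)
  ultimately have "r \<longlonglongrightarrow> 1 * R * 0"
    unfolding r_def by (intro tendsto_mult tendsto_const)
  then have "eventually (\<lambda>N. norm (r N) < 1/2) sequentially"
    using tendstoD[of r 0 sequentially "1/2"] by (simp add: dist_norm)
  then obtain N0 where N0: "norm (r N) \<le> 1/2" if "N \<ge> N0" for N
    unfolding eventually_sequentially by (meson less_imp_le)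
  show ?thesis
  proof (rule summable_ratio_test[of "1/2" N0])
    fix N
    assume "N \<ge> N0"
    then have "norm (?b N) * norm (r N) \<le> norm (?b N) * (1/2)"
      by (intro mult_left_mono N0) simp_all
    then show "norm (?b (Suc N)) \<le> 1/2 * norm (?b N)"
      by (simp only: ratio norm_mult mult.commute)
  qed simp
qed

lemma has_sum_antidiagonals_iff:
  fixes f :: "nat \<times> nat \<Rightarrow> 'a::{comm_monoid_add, topological_space}"
  shows "((\<lambda>(N, n). f (n, N - n)) has_sum s) (SIGMA N:UNIV. {..N}) \<longleftrightarrow> (f has_sum s) UNIV"
  by (rule has_sum_reindex_bij_witness[of _ "\<lambda>(n, k). (n + k, n)" "\<lambda>(N, n). (n, N - n)"]) auto

lemma has_sum_antidiagonal_sums: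
  fixes f :: "nat \<times> nat \<Rightarrow> 'a::banach"
  assumes "summable (\<lambda>N. \<Sum>n\<le>N. norm (f (n, N - n)))"
  shows "(f has_sum infsum f UNIV) UNIV"
    and "(\<lambda>N. \<Sum>n\<le>N. f (n, N - n)) sums infsum f UNIV"
proof -
  define S where "S = (SIGMA N:UNIV. {..N::nat})"
  have "(\<lambda>N. \<Sum>n\<le>N. norm (f (n, N - n))) summable_on UNIV"
    using assms by (rule summable_on_UNIV_nonneg_real_iff[THEN iffD2, rotated]) (simp add: sum_nonneg)
  then have "(\<lambda>(N, n). f (n, N - n)) abs_summable_on S"
    unfolding S_def
    by (intro Infinite_Sum.abs_summable_on_Sigma_iff[THEN iffD2] conjI ballI) (simp_all add: sum_nonneg)
  then have summable: "(\<lambda>(N, n). f (n, N - n)) summable_on S"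
    by (rule abs_summable_summable)
  then have f: "(f has_sum infsum (\<lambda>(N, n). f (n, N - n)) S) UNIV"
    unfolding S_def has_sum_antidiagonals_iff[symmetric] by (rule has_sum_infsum)
  then show "(f has_sum infsum f UNIV) UNIV"
    by (simp add: infsumI)
  have "((\<lambda>N. \<Sum>n\<le>N. f (n, N - n)) has_sum infsum (\<lambda>(N, n). f (n, N - n)) S) UNIV"
    using has_sum_infsum[OF summable_on_Sigma_banach[OF summable[unfolded S_def]]]
    unfolding S_def infsum_Sigma'_banach[OF summable[unfolded S_def]] by simp
  with f show "(\<lambda>N. \<Sum>n\<le>N. f (n, N - n)) sums infsum f UNIV"
    by (simp add: infsumI has_sum_imp_sums)
qed

lemma norm_phi2_term_le:
  fixes a b c x y :: complex
  assumes "n \<le> N"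
  defines "A \<equiv> max (norm a) (norm b)"
  shows "norm (phi2_term a b c x y (n, N - n))
    \<le> pochhammer A N / (fact N * norm (pochhammer c N)) * (of_nat (N choose n) * norm x ^ n * norm y ^ (N - n))"
proof -
  have "norm (pochhammer a n) * norm (pochhammer b (N - n)) \<le> pochhammer A n * pochhammer A (N - n)"
    by (intro mult_mono norm_pochhammer_le pochhammer_nonneg_of_nonneg) (simp_all add: A_def le_max_iff_disj)
  also have "\<dots> \<le> pochhammer A N"
    using pochhammer_mult_le_pochhammer_add[of A n "N - n"] \<open>n \<le> N\<close> by (simp add: A_def le_max_iff_disj)
  finally have poch: "norm (pochhammer a n) * norm (pochhammer b (N - n)) \<le> pochhammer A N" .
  have fact: "1 / (fact n * fact (N - n)) = of_nat (N choose n) / (fact N :: real)"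
    using binomial_fact[OF \<open>n \<le> N\<close>, where 'a=real] by simp
  have "norm (phi2_term a b c x y (n, N - n))
      = norm (pochhammer a n) * norm (pochhammer b (N - n)) * (1 / (fact n * fact (N - n)))
        * (norm x ^ n * norm y ^ (N - n)) / norm (pochhammer c N)"
    using \<open>n \<le> N\<close> by (simp add: phi2_term_def norm_mult norm_divide norm_power mult_ac)
  also have "\<dots> \<le> pochhammer A N * (of_nat (N choose n) / fact N)
        * (norm x ^ n * norm y ^ (N - n)) / norm (pochhammer c N)"
    unfolding fact by (intro divide_right_mono mult_right_mono poch) simp_all
  finally show ?thesis
    by (simp add: field_simps)
qed

lemma summable_phi2_term_antidiagonal_norms:
  "summable (\<lambda>N. \<Sum>n\<le>N. norm (phi2_term a b c x y (n, N - n)))"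
proof (rule summable_comparison_test'[OF summable_pochhammer_majorant])
  fix N
  define K where "K = pochhammer (max (norm a) (norm b)) N / (fact N * norm (pochhammer c N))"
  have "(\<Sum>n\<le>N. norm (phi2_term a b c x y (n, N - n)))
      \<le> (\<Sum>n\<le>N. K * (of_nat (N choose n) * norm x ^ n * norm y ^ (N - n)))"
    unfolding K_def by (intro sum_mono norm_phi2_term_le) simp
  also have "\<dots> = K * (norm x + norm y) ^ N"
    by (simp add: binomial_ring sum_distrib_left mult_ac)
  finally show "norm (\<Sum>n\<le>N. norm (phi2_term a b c x y (n, N - n)))
      \<le> pochhammer (max (norm a) (norm b)) N * (norm x + norm y) ^ N / (fact N * norm (pochhammer c N))"
    by (simp add: K_def sum_nonneg)
qed (simp add: le_max_iff_disj)

lemma phi2_has_sum: "(phi2_term a b c x y has_sum phi2 a b c x y) UNIV"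
  unfolding phi2_def by (rule has_sum_antidiagonal_sums(1)[OF summable_phi2_term_antidiagonal_norms])

lemma phi2_antidiagonal_sums: "(\<lambda>N. \<Sum>n\<le>N. phi2_term a b c x y (n, N - n)) sums phi2 a b c x y"
  unfolding phi2_def by (rule has_sum_antidiagonal_sums(2)[OF summable_phi2_term_antidiagonal_norms])

lemma phi2_term_reflected_antidiagonal_sum:
  "(\<Sum>n\<le>N. phi2_term a a c x (-x) (n, N - n))
    = (if even N then x ^ N / pochhammer c N * (pochhammer a (N div 2) / fact (N div 2)) else 0)"
proof -
  have "phi2_term a a c x (-x) (n, N - n) = x ^ N / pochhammer c N
      * (pochhammer a n / fact n * ((-1) ^ (N - n) * pochhammer a (N - n) / fact (N - n)))"
    if "n \<le> N" for n
  proof -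
    have "x ^ N = x ^ n * x ^ (N - n)"
      using that by (simp flip: power_add)
    then show ?thesis
      using that by (simp add: phi2_term_def power_minus[of x] field_simps)
  qed
  then have "(\<Sum>n\<le>N. phi2_term a a c x (-x) (n, N - n)) = x ^ N / pochhammer c N
      * fps_nth (Abs_fps (\<lambda>n. pochhammer a n / fact n) * Abs_fps (\<lambda>n. (-1)^n * pochhammer a n / fact n)) N"
    by (simp add: fps_mult_nth sum_distrib_left atLeast0AtMost)
  then show ?thesis
    by (simp add: fps_pochhammer_reflection_product)
qed

lemma hyp1F2_term_sums_phi2_reflected:
  "hyp1F2_term a (c/2) (c/2 + 1/2) (x^2/4) sums phi2 a a c x (-x)"
proof -
  have "hyp1F2_term a (c/2) (c/2 + 1/2) (x^2/4) = (\<lambda>m. \<Sum>n\<le>2 * m. phi2_term a a c x (-x) (n, 2 * m - n))"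
  proof
    fix m
    have "pochhammer c (2 * m) = 4 ^ m * pochhammer (c/2) m * pochhammer (c/2 + 1/2) m"
      using pochhammer_double[of "c/2" m] by (simp add: power_mult)
    then show "hyp1F2_term a (c/2) (c/2 + 1/2) (x^2/4) m = (\<Sum>n\<le>2 * m. phi2_term a a c x (-x) (n, 2 * m - n))"
      by (simp add: phi2_term_reflected_antidiagonal_sum hyp1F2_term_def power_divide mult_ac flip: power_mult)
  qed
  moreover have "(\<lambda>m. \<Sum>n\<le>2 * m. phi2_term a a c x (-x) (n, 2 * m - n)) sums phi2 a a c x (-x)"
    using phi2_antidiagonal_sums[of a a c x "-x"]
    by (subst sums_mono_reindex[of "\<lambda>m. 2 * m"])
       (auto simp: strict_mono_def phi2_term_reflected_antidiagonal_sum elim!: evenE)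
  ultimately show ?thesis
    by (simp only:)
qed

lemma hyp1F2_term_eq_hyp0F1_term:
  assumes "pochhammer a k \<noteq> 0"
  shows "hyp1F2_term a a b z k = hyp0F1_term b z k"
  using assms by (simp add: hyp1F2_term_def hyp0F1_term_def)

theorem mainTheorem3:
  fixes a c x :: complex
  assumes "\<forall>m::nat. c \<noteq> - of_nat m"
  shows "(phi2_term a a c x (-x) has_sum phi2 a a c x (-x)) UNIV
       \<and> (hyp1F2_term a (c/2) (c/2 + 1/2) (x^2/4) sums phi2 a a c x (-x))
       \<and> ((\<forall>m::nat. 2 * a \<noteq> - of_nat m) \<longrightarrow>
            (phi2_term a a (2*a) x (-x) has_sum phi2 a a (2*a) x (-x)) UNIV
          \<and> (hyp0F1_term (a + 1/2) (x^2/4) sums phi2 a a (2*a) x (-x)))"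
proof (intro conjI impI phi2_has_sum hyp1F2_term_sums_phi2_reflected)
  assume a_ok: "\<forall>m::nat. 2 * a \<noteq> - of_nat m"
  have "pochhammer a k \<noteq> 0" for k
    using a_ok by (auto simp: pochhammer_eq_0_iff) (metis mult_minus_right of_nat_mult of_nat_numeral)
  then have "hyp1F2_term a a (a + 1/2) (x^2/4) = hyp0F1_term (a + 1/2) (x^2/4)"
    by (intro ext hyp1F2_term_eq_hyp0F1_term)
  then show "hyp0F1_term (a + 1/2) (x^2/4) sums phi2 a a (2*a) x (-x)"
    using hyp1F2_term_sums_phi2_reflected[of a "2*a" x] by simp
qed

end
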